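(* Let $A$ be a ring, $\delta=(\delta_1,\ldots,\delta_n)$ an $n$-tuple of pairwise commuting derivations of $A$, $d_i\in\mathbb{N}\cup\{\infty\}$, $I=\{\alpha\in\mathbb{N}^n\mid\alpha_i\le d_i\ \forall i\}$, and let $\{x^{[\alpha]}\mid\alpha\in I\}$ be a $\delta$-descent. Let $\{x'^{[\alpha]}\mid\alpha\in I\}\subseteq A$. The following are equivalent: (1) $\{x'^{[\alpha]}\mid\alpha\in I\}$ is a $\delta$-descent; (2) $x'^{[0]}=1$ and there are elements $\lambda_\gamma\in A^\delta$ ($0\neq\gamma\in I$) such that $x'^{[\alpha]}=x^{[\alpha]}+\sum_{0\neq\beta\le\alpha}\lambda_\beta x^{[\alpha-\beta]}$ for every $0\neq\alpha\in I$; (3) $x'^{[0]}=1$ and there are elements $\mu_\gamma\in A^\delta$ ($0\neq\gamma\in I$) such that $x'^{[\alpha]}=x^{[\alpha]}+\sum_{0\neq\beta\le\alpha}x^{[\alpha-\beta]}\mu_\beta$ for every $0\neq\alpha\in I$.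
   Context: $A^\delta=\bigcap_i\ker\delta_i$; $\beta\le\alpha$ means $\beta_i\le\alpha_i$ for all $i$; $\delta^\alpha=\delta_1^{\alpha_1}\cdots\delta_n^{\alpha_n}$. A family $\{y^{[\alpha]}\mid\alpha\in I\}$ is a $\delta$-descent if $y^{[0]}=1$ and $\delta^\alpha(y^{[\beta]})=y^{[\beta-\alpha]}$ for all $\alpha\in\mathbb{N}^n$, $\beta\in I$, where $y^{[\gamma]}:=0$ for $\gamma\notin\mathbb{N}^n$. *)

theory Defs
  imports Main "HOL-Library.Extended_Nat" "HOL-Library.Function_Algebras"
begin

text \<open>Multi-indices in N^n are functions nat => nat vanishing outside {..<n};
  the order and subtraction on them are the pointwise ones (le_fun, minus_fun).\<close>

definition multi_idx :: "nat \<Rightarrow> (nat \<Rightarrow> nat) set" where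
  "multi_idx n = {\<alpha>. \<forall>i\<ge>n. \<alpha> i = 0}"

definition idx_set :: "nat \<Rightarrow> (nat \<Rightarrow> enat) \<Rightarrow> (nat \<Rightarrow> nat) set" where
  "idx_set n d = {\<alpha> \<in> multi_idx n. \<forall>i<n. enat (\<alpha> i) \<le> d i}"

definition is_derivation :: "('a::ring_1 \<Rightarrow> 'a) \<Rightarrow> bool" where
  "is_derivation D \<longleftrightarrow> (\<forall>a b. D (a + b) = D a + D b) \<and> (\<forall>a b. D (a * b) = D a * b + a * D b)"

definition commuting_derivations :: "nat \<Rightarrow> (nat \<Rightarrow> 'a::ring_1 \<Rightarrow> 'a) \<Rightarrow> bool" where
  "commuting_derivations n \<delta> \<longleftrightarrow> (\<forall>i<n. is_derivation (\<delta> i)) \<and>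
     (\<forall>i<n. \<forall>j<n. \<delta> i \<circ> \<delta> j = \<delta> j \<circ> \<delta> i)"

definition constants :: "nat \<Rightarrow> (nat \<Rightarrow> 'a::ring_1 \<Rightarrow> 'a) \<Rightarrow> 'a set" where
  "constants n \<delta> = {a. \<forall>i<n. \<delta> i a = 0}"

definition delta_pow :: "nat \<Rightarrow> (nat \<Rightarrow> 'a \<Rightarrow> 'a) \<Rightarrow> (nat \<Rightarrow> nat) \<Rightarrow> 'a \<Rightarrow> 'a" where
  "delta_pow n \<delta> \<alpha> = foldr (\<lambda>i f. (\<delta> i ^^ \<alpha> i) \<circ> f) [0..<n] id"

text \<open>y^[gamma] := 0 for gamma not in N^n, i.e. when alpha is not <= beta.\<close>
definition is_descent :: "nat \<Rightarrow> (nat \<Rightarrow> 'a::ring_1 \<Rightarrow> 'a) \<Rightarrow> (nat \<Rightarrow> nat) set \<Rightarrow> ((nat \<Rightarrow> nat) \<Rightarrow> 'a) \<Rightarrow> bool" where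
  "is_descent n \<delta> I y \<longleftrightarrow> y 0 = 1 \<and>
     (\<forall>\<alpha>\<in>multi_idx n. \<forall>\<beta>\<in>I. delta_pow n \<delta> \<alpha> (y \<beta>) = (if \<alpha> \<le> \<beta> then y (\<beta> - \<alpha>) else 0))"

end

theory Submission
  imports Defs
begin

text \<open>Write \<open>x' = x + \<lambda> * x\<close>, where \<open>(\<lambda> * x) \<alpha>\<close> is the sum of \<open>\<lambda> \<beta> x (\<alpha> - \<beta>)\<close>
  over \<open>0 \<noteq> \<beta> \<le> \<alpha>\<close>. Since \<open>\<delta>\<^sup>\<alpha>\<close> is additive and commutes with multiplication by
  constants, and \<open>x\<close> is a descent, \<open>\<delta>\<^sup>\<alpha>\<close> acts on \<open>\<lambda> * x\<close> by shifting the index down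
  by \<open>\<alpha>\<close>; hence every such \<open>x'\<close> is a descent. Conversely, for a descent \<open>x'\<close> the
  equation \<open>x' = x + \<lambda> * x\<close> can be solved for \<open>\<lambda> \<alpha>\<close> by recursion on \<open>\<alpha>\<close>, because
  \<open>\<lambda> \<alpha>\<close> occurs only in the term \<open>\<lambda> \<alpha> x 0 = \<lambda> \<alpha>\<close>. Applying \<open>\<delta>\<^sub>i\<close> and the shift rule
  expresses \<open>\<delta>\<^sub>i (\<lambda> \<alpha>)\<close> as the defect of the same equation at \<open>\<alpha> - e\<^sub>i\<close>, which
  vanishes, so all \<open>\<lambda> \<alpha>\<close> are constants. The argument only uses multiplication by
  constants from one fixed side, so it yields the left and the right version alike.\<close>

lemma le_fun_diff_swap:
  fixes \<alpha> \<beta> \<gamma> :: "nat \<Rightarrow> nat"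
  assumes "\<gamma> \<le> \<beta>"
  shows "\<alpha> \<le> \<beta> - \<gamma> \<longleftrightarrow> \<alpha> \<le> \<beta> \<and> \<gamma> \<le> \<beta> - \<alpha>"
proof -
  have "\<alpha> i \<le> \<beta> i - \<gamma> i \<longleftrightarrow> \<alpha> i \<le> \<beta> i \<and> \<gamma> i \<le> \<beta> i - \<alpha> i" for i
    using assms[unfolded le_fun_def, rule_format, of i] by arith
  then show ?thesis
    by (simp add: le_fun_def all_conj_distrib)
qed

lemma fun_diff_le_self: "(\<beta> :: nat \<Rightarrow> nat) - \<gamma> \<le> \<beta>"
  by (simp add: le_fun_def)

lemma fun_diff_diff_commute: "(\<beta> :: nat \<Rightarrow> nat) - \<gamma> - \<alpha> = \<beta> - \<alpha> - \<gamma>"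
  by (simp add: fun_eq_iff add.commute)

lemma not_le_diff_self:
  fixes \<alpha> e :: "nat \<Rightarrow> nat"
  assumes "e \<noteq> 0" and "e \<le> \<alpha>"
  shows "\<not> \<alpha> \<le> \<alpha> - e"
proof
  obtain j where "e j \<noteq> 0"
    using assms(1) by (auto simp: fun_eq_iff)
  moreover assume "\<alpha> \<le> \<alpha> - e"
  ultimately show False
    using assms(2) by (auto simp: le_fun_def dest!: spec[of _ j])
qed

lemma finite_le_multi_idx:
  assumes "\<alpha> \<in> multi_idx n"
  shows "finite {\<beta>. \<beta> \<le> \<alpha>}"
proof (rule finite_subset)
  let ?B = "\<Sum>i<n. \<alpha> i"
  show "{\<beta>. \<beta> \<le> \<alpha>} \<subseteq> {f. \<forall>i. (i \<in> {..<n} \<longrightarrow> f i \<in> {..?B}) \<and> (i \<notin> {..<n} \<longrightarrow> f i = 0)}"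
  proof clarify
    fix \<beta> :: "nat \<Rightarrow> nat" and i
    assume "\<beta> \<le> \<alpha>"
    then have le: "\<beta> i \<le> \<alpha> i"
      by (simp add: le_fun_def)
    have "i < n \<Longrightarrow> \<alpha> i \<le> ?B"
      by (rule member_le_sum) auto
    moreover have "\<not> i < n \<Longrightarrow> \<alpha> i = 0"
      using assms by (simp add: multi_idx_def)
    ultimately show "(i \<in> {..<n} \<longrightarrow> \<beta> i \<in> {..?B}) \<and> (i \<notin> {..<n} \<longrightarrow> \<beta> i = 0)"
      using le by auto
  qed
  show "finite {f. \<forall>i. (i \<in> {..<n} \<longrightarrow> f i \<in> {..?B}) \<and> (i \<notin> {..<n} \<longrightarrow> f i = (0::nat))}"
    by (rule finite_set_of_finite_funs) auto
qed

lemma wf_less_multi_idx: "wf {(\<beta>, \<alpha>). \<beta> < \<alpha> \<and> \<alpha> \<in> multi_idx n}"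
proof (rule wf_subset)
  show "{(\<beta>, \<alpha>). \<beta> < \<alpha> \<and> \<alpha> \<in> multi_idx n} \<subseteq> measure (\<lambda>\<alpha>. \<Sum>i<n. \<alpha> i)"
  proof clarsimp
    fix \<alpha> \<beta> :: "nat \<Rightarrow> nat"
    assume "\<beta> < \<alpha>" and \<alpha>: "\<alpha> \<in> multi_idx n"
    then obtain j where le: "\<And>i. \<beta> i \<le> \<alpha> i" and j: "\<beta> j < \<alpha> j"
      by (auto simp: less_fun_def le_fun_def not_le)
    with \<alpha> have "j < n"
      by (cases "j < n") (auto simp: multi_idx_def)
    with le j show "(\<Sum>i<n. \<beta> i) < (\<Sum>i<n. \<alpha> i)"
      by (intro sum_strict_mono_ex1) auto
  qed
qed simp

lemma idx_set_subset: "idx_set n d \<subseteq> multi_idx n"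
  by (auto simp: idx_set_def)

lemma idx_set_downward_closed: "\<beta> \<in> idx_set n d \<Longrightarrow> \<gamma> \<le> \<beta> \<Longrightarrow> \<gamma> \<in> idx_set n d"
  unfolding idx_set_def multi_idx_def le_fun_def
  by (auto, metis le_zero_eq, meson enat_ord_simps(1) order_trans)

definition unit_idx :: "nat \<Rightarrow> nat \<Rightarrow> nat" where
  "unit_idx i = (\<lambda>j. if j = i then 1 else 0)"

lemma unit_idx_in_multi_idx: "i < n \<Longrightarrow> unit_idx i \<in> multi_idx n"
  by (simp add: unit_idx_def multi_idx_def)

lemma unit_idx_nonzero: "unit_idx i \<noteq> 0"
  by (simp add: unit_idx_def fun_eq_iff)

lemma delta_pow_unit_idx:
  assumes "i < n"
  shows "delta_pow n \<delta> (unit_idx i) = \<delta> i"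
proof -
  have "distinct xs \<Longrightarrow> foldr (\<lambda>j f. (\<delta> j ^^ unit_idx i j) \<circ> f) xs id = (if i \<in> set xs then \<delta> i else id)"
    for xs by (induction xs) (auto simp: unit_idx_def)
  with assms show ?thesis
    by (simp add: delta_pow_def)
qed

lemma delta_pow_induct:
  assumes "P id" and "\<And>f g. P f \<Longrightarrow> P g \<Longrightarrow> P (f \<circ> g)" and "\<And>i. i < n \<Longrightarrow> P (\<delta> i)"
  shows "P (delta_pow n \<delta> \<alpha>)"
proof -
  have pow: "P (f ^^ k)" if "P f" for f k
    using that by (induction k) (simp_all add: assms(1,2))
  have "\<forall>i\<in>set xs. i < n \<Longrightarrow> P (foldr (\<lambda>i f. (\<delta> i ^^ \<alpha> i) \<circ> f) xs id)" for xs
    by (induction xs) (simp_all add: assms pow)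
  then show ?thesis
    by (simp add: delta_pow_def)
qed

definition conv_tail :: "('a \<Rightarrow> 'a \<Rightarrow> 'a::ring_1) \<Rightarrow> ((nat \<Rightarrow> nat) \<Rightarrow> 'a) \<Rightarrow> ((nat \<Rightarrow> nat) \<Rightarrow> 'a) \<Rightarrow> (nat \<Rightarrow> nat) \<Rightarrow> 'a"
  where "conv_tail m c x \<alpha> = (\<Sum>\<beta>\<in>{\<beta>. \<beta> \<noteq> 0 \<and> \<beta> \<le> \<alpha>}. m (c \<beta>) (x (\<alpha> - \<beta>)))"

lemma conv_tail_zero [simp]: "conv_tail m c x 0 = 0"
  by (simp add: conv_tail_def order.antisym)

lemma conv_tail_cong:
  "(\<And>\<beta>. \<beta> \<noteq> 0 \<Longrightarrow> \<beta> \<le> \<alpha> \<Longrightarrow> c \<beta> = c' \<beta>) \<Longrightarrow> conv_tail m c x \<alpha> = conv_tail m c' x \<alpha>"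
  unfolding conv_tail_def by (rule sum.cong) auto

text \<open>\<open>m\<close> is multiplication by constants on one fixed side, \<open>\<lambda>c y. c * y\<close> or \<open>\<lambda>c y. y * c\<close>.\<close>

locale constant_scaling =
  fixes n :: nat and \<delta> :: "nat \<Rightarrow> 'a::ring_1 \<Rightarrow> 'a" and m :: "'a \<Rightarrow> 'a \<Rightarrow> 'a"
  assumes additive_delta: "i < n \<Longrightarrow> additive (\<delta> i)"
    and delta_scale: "i < n \<Longrightarrow> c \<in> constants n \<delta> \<Longrightarrow> \<delta> i (m c y) = m c (\<delta> i y)"
    and scale_zero_left: "m 0 y = 0"
    and scale_zero_right: "m c 0 = 0"
    and scale_one_right: "m c 1 = c"
begin

lemma additive_delta_pow: "additive (delta_pow n \<delta> \<alpha>)"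
  by (rule delta_pow_induct) (auto simp: additive_def additive_delta[unfolded additive_def])

lemma delta_pow_scale:
  assumes "c \<in> constants n \<delta>"
  shows "delta_pow n \<delta> \<alpha> (m c y) = m c (delta_pow n \<delta> \<alpha> y)"
proof -
  have "\<forall>y. delta_pow n \<delta> \<alpha> (m c y) = m c (delta_pow n \<delta> \<alpha> y)"
    by (rule delta_pow_induct[where P = "\<lambda>f. \<forall>y. f (m c y) = m c (f y)"])
      (simp_all add: delta_scale assms)
  then show ?thesis ..
qed

lemma zero_in_constants: "0 \<in> constants n \<delta>"
  by (simp add: constants_def additive.zero[OF additive_delta])

end

locale reference_descent = constant_scaling +
  fixes I :: "(nat \<Rightarrow> nat) set" and x :: "(nat \<Rightarrow> nat) \<Rightarrow> 'a::ring_1"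
  assumes I_subset: "I \<subseteq> multi_idx n"
    and I_downward_closed: "\<beta> \<in> I \<Longrightarrow> \<gamma> \<le> \<beta> \<Longrightarrow> \<gamma> \<in> I"
    and descent: "is_descent n \<delta> I x"
begin

lemma x_zero: "x 0 = 1"
  using descent by (simp add: is_descent_def)

lemma delta_pow_x:
  "\<alpha> \<in> multi_idx n \<Longrightarrow> \<beta> \<in> I \<Longrightarrow> delta_pow n \<delta> \<alpha> (x \<beta>) = (if \<alpha> \<le> \<beta> then x (\<beta> - \<alpha>) else 0)"
  using descent by (simp add: is_descent_def)

lemma finite_le_I: "\<beta> \<in> I \<Longrightarrow> finite {\<gamma>. \<gamma> \<le> \<beta>}"
  using I_subset finite_le_multi_idx by blast

lemma delta_pow_conv_tail:
  assumes \<alpha>: "\<alpha> \<in> multi_idx n" and \<beta>: "\<beta> \<in> I"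
    and c: "\<And>\<gamma>. \<gamma> \<noteq> 0 \<Longrightarrow> \<gamma> \<le> \<beta> \<Longrightarrow> c \<gamma> \<in> constants n \<delta>"
  shows "delta_pow n \<delta> \<alpha> (conv_tail m c x \<beta>) = (if \<alpha> \<le> \<beta> then conv_tail m c x (\<beta> - \<alpha>) else 0)"
proof -
  let ?S = "{\<gamma>. \<gamma> \<noteq> 0 \<and> \<gamma> \<le> \<beta>}"
  have fin: "finite ?S"
    using finite_le_I[OF \<beta>] by (rule rev_finite_subset) blast
  have "delta_pow n \<delta> \<alpha> (conv_tail m c x \<beta>) = (\<Sum>\<gamma>\<in>?S. m (c \<gamma>) (delta_pow n \<delta> \<alpha> (x (\<beta> - \<gamma>))))"
    by (simp add: conv_tail_def additive.sum[OF additive_delta_pow] delta_pow_scale c)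
  also have "\<dots> = (\<Sum>\<gamma>\<in>?S. if \<alpha> \<le> \<beta> - \<gamma> then m (c \<gamma>) (x (\<beta> - \<alpha> - \<gamma>)) else 0)"
    using \<beta> by (intro sum.cong)
      (auto simp: delta_pow_x[OF \<alpha>] I_downward_closed[OF _ fun_diff_le_self] scale_zero_right
        fun_diff_diff_commute[of \<beta>])
  also have "\<dots> = (\<Sum>\<gamma>\<in>{\<gamma>\<in>?S. \<alpha> \<le> \<beta> - \<gamma>}. m (c \<gamma>) (x (\<beta> - \<alpha> - \<gamma>)))"
    by (rule sum.inter_filter[OF fin, symmetric])
  also have "{\<gamma>\<in>?S. \<alpha> \<le> \<beta> - \<gamma>} = (if \<alpha> \<le> \<beta> then {\<gamma>. \<gamma> \<noteq> 0 \<and> \<gamma> \<le> \<beta> - \<alpha>} else {})"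
    by (auto simp: le_fun_diff_swap)
  finally show ?thesis
    by (cases "\<alpha> \<le> \<beta>") (simp_all only: conv_tail_def if_True if_False sum.empty)
qed

lemma is_descent_if_perturbation:
  assumes y_zero: "y 0 = 1"
    and c: "\<forall>\<gamma>\<in>I. \<gamma> \<noteq> 0 \<longrightarrow> c \<gamma> \<in> constants n \<delta>"
    and y: "\<forall>\<alpha>\<in>I. \<alpha> \<noteq> 0 \<longrightarrow> y \<alpha> = x \<alpha> + conv_tail m c x \<alpha>"
  shows "is_descent n \<delta> I y"
proof -
  have y_eq: "y \<alpha> = x \<alpha> + conv_tail m c x \<alpha>" if "\<alpha> \<in> I" for \<alpha>
    using y that y_zero by (cases "\<alpha> = 0") (simp_all add: x_zero)
  have "delta_pow n \<delta> \<alpha> (y \<beta>) = (if \<alpha> \<le> \<beta> then y (\<beta> - \<alpha>) else 0)"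
    if \<alpha>: "\<alpha> \<in> multi_idx n" and \<beta>: "\<beta> \<in> I" for \<alpha> \<beta>
  proof -
    have "\<beta> - \<alpha> \<in> I"
      using \<beta> fun_diff_le_self by (rule I_downward_closed)
    moreover have "\<And>\<gamma>. \<gamma> \<noteq> 0 \<Longrightarrow> \<gamma> \<le> \<beta> \<Longrightarrow> c \<gamma> \<in> constants n \<delta>"
      using c \<beta> I_downward_closed by blast
    ultimately show ?thesis
      using \<alpha> \<beta> y_eq by (simp add: additive.add[OF additive_delta_pow] delta_pow_x delta_pow_conv_tail)
  qed
  with y_zero show ?thesis
    by (simp add: is_descent_def)
qed

lemma conv_tail_remove_top:
  assumes "\<alpha> \<in> I" and "\<alpha> \<noteq> 0"
  shows "conv_tail m c x \<alpha> = c \<alpha> + conv_tail m (c(\<alpha> := 0)) x \<alpha>"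
proof -
  let ?S = "{\<beta>. \<beta> \<noteq> 0 \<and> \<beta> \<le> \<alpha>}"
  have fin: "finite ?S"
    using finite_le_I[OF assms(1)] by (rule rev_finite_subset) blast
  have top: "\<alpha> \<in> ?S"
    using assms(2) by simp
  have "conv_tail m c x \<alpha> = m (c \<alpha>) (x 0) + (\<Sum>\<beta>\<in>?S - {\<alpha>}. m (c \<beta>) (x (\<alpha> - \<beta>)))"
    unfolding conv_tail_def by (subst sum.remove[OF fin top]) simp
  moreover have "conv_tail m (c(\<alpha> := 0)) x \<alpha> = (\<Sum>\<beta>\<in>?S - {\<alpha>}. m (c \<beta>) (x (\<alpha> - \<beta>)))"
    unfolding conv_tail_def by (subst sum.remove[OF fin top]) (simp add: scale_zero_left)
  ultimately show ?thesis
    by (simp add: x_zero scale_one_right)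
qed

lemma perturbation_coefficient_constant:
  assumes y: "is_descent n \<delta> I y" and \<alpha>: "\<alpha> \<in> I" "\<alpha> \<noteq> 0"
    and c_below: "\<And>\<gamma>. \<gamma> \<noteq> 0 \<Longrightarrow> \<gamma> < \<alpha> \<Longrightarrow> c \<gamma> \<in> constants n \<delta>"
    and y_eq: "\<And>\<beta>. \<beta> \<in> I \<Longrightarrow> \<beta> \<noteq> 0 \<Longrightarrow> y \<beta> = x \<beta> + conv_tail m c x \<beta>"
  shows "c \<alpha> \<in> constants n \<delta>"
proof -
  let ?c' = "c(\<alpha> := 0)"
  have c_top: "c \<alpha> = y \<alpha> - x \<alpha> - conv_tail m ?c' x \<alpha>"
    using y_eq[OF \<alpha>] conv_tail_remove_top[OF \<alpha>, of c] by (simp add: algebra_simps)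
  have c': "?c' \<gamma> \<in> constants n \<delta>" if "\<gamma> \<noteq> 0" "\<gamma> \<le> \<alpha>" for \<gamma>
    using that c_below by (cases "\<gamma> = \<alpha>") (simp_all add: zero_in_constants less_le)
  have "\<delta> i (c \<alpha>) = 0" if i: "i < n" for i
  proof -
    let ?e = "unit_idx i"
    have e: "?e \<in> multi_idx n" "?e \<noteq> 0"
      using i by (simp_all add: unit_idx_in_multi_idx unit_idx_nonzero)
    have "\<delta> i (c \<alpha>) = delta_pow n \<delta> ?e (y \<alpha> - x \<alpha> - conv_tail m ?c' x \<alpha>)"
      by (simp add: c_top delta_pow_unit_idx[OF i])
    also have "\<dots> = (if ?e \<le> \<alpha> then y (\<alpha> - ?e) - x (\<alpha> - ?e) - conv_tail m ?c' x (\<alpha> - ?e) else 0)"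
      using y e \<alpha> c' by (simp add: additive.diff[OF additive_delta_pow] delta_pow_x
          delta_pow_conv_tail is_descent_def)
    also have "\<dots> = (if ?e \<le> \<alpha> then y (\<alpha> - ?e) - x (\<alpha> - ?e) - conv_tail m c x (\<alpha> - ?e) else 0)"
    proof -
      have "conv_tail m ?c' x (\<alpha> - ?e) = conv_tail m c x (\<alpha> - ?e)" if "?e \<le> \<alpha>"
      proof (rule conv_tail_cong)
        fix \<gamma> assume "\<gamma> \<le> \<alpha> - ?e"
        with not_le_diff_self[OF e(2) that] show "?c' \<gamma> = c \<gamma>"
          by (cases "\<gamma> = \<alpha>") simp_all
      qed
      then show ?thesis
        by simp
    qed
    also have "\<dots> = 0"
      using y_eq I_downward_closed[OF \<alpha>(1) fun_diff_le_self] y x_zero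
      by (cases "\<alpha> - ?e = 0") (simp_all add: is_descent_def)
    finally show ?thesis .
  qed
  then show ?thesis
    by (simp add: constants_def)
qed

lemma perturbation_of_descent:
  assumes y: "is_descent n \<delta> I y"
  obtains c where "\<forall>\<gamma>\<in>I. \<gamma> \<noteq> 0 \<longrightarrow> c \<gamma> \<in> constants n \<delta>"
    and "\<forall>\<alpha>\<in>I. \<alpha> \<noteq> 0 \<longrightarrow> y \<alpha> = x \<alpha> + conv_tail m c x \<alpha>"
proof -
  define R where "R = {(\<beta>, \<alpha>). \<beta> < \<alpha> \<and> \<alpha> \<in> multi_idx n}"
  have wf: "wf R"
    unfolding R_def by (rule wf_less_multi_idx)
  define c where "c = wfrec R (\<lambda>c \<alpha>. y \<alpha> - x \<alpha> - conv_tail m (c(\<alpha> := 0)) x \<alpha>)"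
  have c_rec: "c \<alpha> = y \<alpha> - x \<alpha> - conv_tail m (c(\<alpha> := 0)) x \<alpha>" if "\<alpha> \<in> multi_idx n" for \<alpha>
  proof -
    have "c \<alpha> = y \<alpha> - x \<alpha> - conv_tail m ((cut c R \<alpha>)(\<alpha> := 0)) x \<alpha>"
      unfolding c_def by (rule wfrec[OF wf])
    also have "conv_tail m ((cut c R \<alpha>)(\<alpha> := 0)) x \<alpha> = conv_tail m (c(\<alpha> := 0)) x \<alpha>"
      using that by (intro conv_tail_cong) (auto simp: cut_apply R_def less_le)
    finally show ?thesis .
  qed
  have y_eq: "y \<alpha> = x \<alpha> + conv_tail m c x \<alpha>" if "\<alpha> \<in> I" "\<alpha> \<noteq> 0" for \<alpha>
    using conv_tail_remove_top[OF that, of c] c_rec[of \<alpha>] that(1) I_subset by auto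
  have "\<alpha> \<in> I \<longrightarrow> \<alpha> \<noteq> 0 \<longrightarrow> c \<alpha> \<in> constants n \<delta>" for \<alpha>
  proof (induction \<alpha> rule: wf_induct_rule[OF wf])
    case (1 \<alpha>)
    show ?case
    proof (intro impI)
      assume \<alpha>: "\<alpha> \<in> I" "\<alpha> \<noteq> 0"
      have "c \<gamma> \<in> constants n \<delta>" if "\<gamma> \<noteq> 0" "\<gamma> < \<alpha>" for \<gamma>
      proof -
        have "(\<gamma>, \<alpha>) \<in> R"
          using that \<alpha>(1) I_subset by (auto simp: R_def)
        moreover have "\<gamma> \<in> I"
          using \<alpha>(1) less_imp_le[OF that(2)] by (rule I_downward_closed)
        ultimately show ?thesis
          using 1 that(1) by blast
      qed
      then show "c \<alpha> \<in> constants n \<delta>"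
        by (rule perturbation_coefficient_constant[OF y \<alpha> _ y_eq])
    qed
  qed
  with y_eq show ?thesis
    using that by blast
qed

lemma is_descent_iff_perturbation:
  "is_descent n \<delta> I y \<longleftrightarrow> y 0 = 1 \<and> (\<exists>c. (\<forall>\<gamma>\<in>I. \<gamma> \<noteq> 0 \<longrightarrow> c \<gamma> \<in> constants n \<delta>) \<and>
     (\<forall>\<alpha>\<in>I. \<alpha> \<noteq> 0 \<longrightarrow> y \<alpha> = x \<alpha> + conv_tail m c x \<alpha>))"
  by (metis is_descent_def is_descent_if_perturbation perturbation_of_descent)

end

lemma constant_scaling_left:
  assumes "commuting_derivations n \<delta>"
  shows "constant_scaling n \<delta> (\<lambda>c y. c * y)"
  using assms by unfold_locales
    (auto simp: commuting_derivations_def is_derivation_def constants_def additive_def)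

lemma constant_scaling_right:
  assumes "commuting_derivations n \<delta>"
  shows "constant_scaling n \<delta> (\<lambda>c y. y * c)"
  using assms by unfold_locales
    (auto simp: commuting_derivations_def is_derivation_def constants_def additive_def)

lemma reference_descent_idx_set:
  assumes "constant_scaling n \<delta> m" and "is_descent n \<delta> (idx_set n d) x"
  shows "reference_descent n \<delta> m (idx_set n d) x"
  using assms idx_set_subset idx_set_downward_closed
  by (simp add: reference_descent_def reference_descent_axioms_def)

theorem lemma2p2:
  fixes n :: nat and \<delta> :: "nat \<Rightarrow> 'a::ring_1 \<Rightarrow> 'a" and d :: "nat \<Rightarrow> enat"
    and x x' :: "(nat \<Rightarrow> nat) \<Rightarrow> 'a"
  assumes "commuting_derivations n \<delta>"
    and "is_descent n \<delta> (idx_set n d) x"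
  shows "(is_descent n \<delta> (idx_set n d) x'
      \<longleftrightarrow> (x' 0 = 1 \<and> (\<exists>lam. (\<forall>\<gamma>\<in>idx_set n d. \<gamma> \<noteq> 0 \<longrightarrow> lam \<gamma> \<in> constants n \<delta>) \<and>
            (\<forall>\<alpha>\<in>idx_set n d. \<alpha> \<noteq> 0 \<longrightarrow>
               x' \<alpha> = x \<alpha> + (\<Sum>\<beta>\<in>{\<beta>. \<beta> \<noteq> 0 \<and> \<beta> \<le> \<alpha>}. lam \<beta> * x (\<alpha> - \<beta>))))))
    \<and> (is_descent n \<delta> (idx_set n d) x'
      \<longleftrightarrow> (x' 0 = 1 \<and> (\<exists>\<mu>. (\<forall>\<gamma>\<in>idx_set n d. \<gamma> \<noteq> 0 \<longrightarrow> \<mu> \<gamma> \<in> constants n \<delta>) \<and>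
            (\<forall>\<alpha>\<in>idx_set n d. \<alpha> \<noteq> 0 \<longrightarrow>
               x' \<alpha> = x \<alpha> + (\<Sum>\<beta>\<in>{\<beta>. \<beta> \<noteq> 0 \<and> \<beta> \<le> \<alpha>}. x (\<alpha> - \<beta>) * \<mu> \<beta>)))))"
proof -
  interpret left: reference_descent n \<delta> "\<lambda>c y. c * y" "idx_set n d" x
    using constant_scaling_left[OF assms(1)] assms(2) by (rule reference_descent_idx_set)
  interpret right: reference_descent n \<delta> "\<lambda>c y. y * c" "idx_set n d" x
    using constant_scaling_right[OF assms(1)] assms(2) by (rule reference_descent_idx_set)
  show ?thesis
    using left.is_descent_iff_perturbation[of x'] right.is_descent_iff_perturbation[of x']
    by (simp add: conv_tail_def)
qed

end
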